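(* Let $M$ be a locally-finite map in the hyperbolic plane with exactly one end such that $V(M)$ is a locally finite collection of vertices, and suppose a group $G\le\mathrm{Isom}(\mathbb{H}^2)$ acts quasi-transitively on $M$. Then $G$ is finitely generated.
   Context: A map $M$ in a surface $X$ is a (simple, connected, infinite) graph embedded in $X$: vertices are distinct points, edges are curves meeting only at common endpoints, and each face is homeomorphic to an open disc. Locally-finite and number of ends refer to the underlying graph. $V(M)$ is a locally finite collection of vertices if every compact subset contains only finitely many vertices of $M$. $G$ acts on $M$ if each $g\in G$ maps $M$ to itself with $g(V(M))=V(M)$ inducing a graph automorphism; quasi-transitively means finitely many orbits on $V(M)$. *)

theory Defs
  imports "HOL-Analysis.Analysis"
begin

definition hdisc :: "complex set" where
  "hdisc = ball 0 1"

definition hdist :: "complex \<Rightarrow> complex \<Rightarrow> real" where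
  "hdist x y = arcosh (1 + 2 * (cmod (x - y))^2 / ((1 - (cmod x)^2) * (1 - (cmod y)^2)))"

text \<open>Isometries of the hyperbolic plane; normalised to be the identity off the disc,
  so that they form a group under composition.\<close>
definition hyp_isom :: "(complex \<Rightarrow> complex) \<Rightarrow> bool" where
  "hyp_isom f \<longleftrightarrow> bij_betw f hdisc hdisc
     \<and> (\<forall>x\<in>hdisc. \<forall>y\<in>hdisc. hdist (f x) (f y) = hdist x y)
     \<and> (\<forall>x. x \<notin> hdisc \<longrightarrow> f x = x)"

definition isom_inv :: "(complex \<Rightarrow> complex) \<Rightarrow> complex \<Rightarrow> complex" where
  "isom_inv f = (\<lambda>x. if x \<in> hdisc then inv_into hdisc f x else x)"

definition isom_subgroup :: "(complex \<Rightarrow> complex) set \<Rightarrow> bool" where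
  "isom_subgroup G \<longleftrightarrow> (\<forall>g\<in>G. hyp_isom g) \<and> id \<in> G
     \<and> (\<forall>g\<in>G. \<forall>h\<in>G. g \<circ> h \<in> G) \<and> (\<forall>g\<in>G. isom_inv g \<in> G)"

inductive_set isom_generated :: "(complex \<Rightarrow> complex) set \<Rightarrow> (complex \<Rightarrow> complex) set"
  for S where
  gen_id: "id \<in> isom_generated S"
| gen_mult: "s \<in> S \<Longrightarrow> g \<in> isom_generated S \<Longrightarrow> s \<circ> g \<in> isom_generated S"
| gen_inv: "s \<in> S \<Longrightarrow> g \<in> isom_generated S \<Longrightarrow> isom_inv s \<circ> g \<in> isom_generated S"

definition finitely_generated :: "(complex \<Rightarrow> complex) set \<Rightarrow> bool" where
  "finitely_generated G \<longleftrightarrow> (\<exists>S. finite S \<and> S \<subseteq> G \<and> isom_generated S = G)"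

definition simple_graph :: "'a set \<Rightarrow> ('a \<Rightarrow> 'a \<Rightarrow> bool) \<Rightarrow> bool" where
  "simple_graph V E \<longleftrightarrow> (\<forall>u v. E u v \<longrightarrow> u \<in> V \<and> v \<in> V \<and> u \<noteq> v \<and> E v u)"

definition conn_in :: "'a set \<Rightarrow> ('a \<Rightarrow> 'a \<Rightarrow> bool) \<Rightarrow> 'a \<Rightarrow> 'a \<Rightarrow> bool" where
  "conn_in W E u v \<longleftrightarrow> (\<exists>p::'a list. p \<noteq> [] \<and> hd p = u \<and> last p = v \<and> set p \<subseteq> W
      \<and> (\<forall>i. Suc i < length p \<longrightarrow> E (p ! i) (p ! Suc i)))"

definition graph_connected :: "'a set \<Rightarrow> ('a \<Rightarrow> 'a \<Rightarrow> bool) \<Rightarrow> bool" where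
  "graph_connected V E \<longleftrightarrow> (\<forall>u\<in>V. \<forall>v\<in>V. conn_in V E u v)"

definition locally_finite_graph :: "'a set \<Rightarrow> ('a \<Rightarrow> 'a \<Rightarrow> bool) \<Rightarrow> bool" where
  "locally_finite_graph V E \<longleftrightarrow> (\<forall>v\<in>V. finite {u. E v u})"

definition is_ray :: "'a set \<Rightarrow> ('a \<Rightarrow> 'a \<Rightarrow> bool) \<Rightarrow> (nat \<Rightarrow> 'a) \<Rightarrow> bool" where
  "is_ray V E r \<longleftrightarrow> inj r \<and> range r \<subseteq> V \<and> (\<forall>n. E (r n) (r (Suc n)))"

definition ray_equiv :: "'a set \<Rightarrow> ('a \<Rightarrow> 'a \<Rightarrow> bool) \<Rightarrow> (nat \<Rightarrow> 'a) \<Rightarrow> (nat \<Rightarrow> 'a) \<Rightarrow> bool" where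
  "ray_equiv V E r s \<longleftrightarrow> (\<forall>F. finite F \<longrightarrow>
     (\<exists>m n. (\<forall>i\<ge>m. r i \<notin> F) \<and> (\<forall>j\<ge>n. s j \<notin> F) \<and> conn_in (V - F) E (r m) (s n)))"

definition one_ended :: "'a set \<Rightarrow> ('a \<Rightarrow> 'a \<Rightarrow> bool) \<Rightarrow> bool" where
  "one_ended V E \<longleftrightarrow> (\<exists>r. is_ray V E r) \<and>
     (\<forall>r s. is_ray V E r \<longrightarrow> is_ray V E s \<longrightarrow> ray_equiv V E r s)"

definition edge_set :: "complex set \<Rightarrow> (complex \<Rightarrow> complex \<Rightarrow> bool)
    \<Rightarrow> (complex \<Rightarrow> complex \<Rightarrow> real \<Rightarrow> complex) \<Rightarrow> complex set" where
  "edge_set V E c = (\<Union>{path_image (c u v) | u v. E u v})"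

definition is_hyp_map :: "complex set \<Rightarrow> (complex \<Rightarrow> complex \<Rightarrow> bool)
    \<Rightarrow> (complex \<Rightarrow> complex \<Rightarrow> real \<Rightarrow> complex) \<Rightarrow> bool" where
  "is_hyp_map V E c \<longleftrightarrow>
     simple_graph V E \<and> graph_connected V E \<and> infinite V \<and> V \<subseteq> hdisc
   \<and> (\<forall>u v. E u v \<longrightarrow> arc (c u v) \<and> pathstart (c u v) = u \<and> pathfinish (c u v) = v
          \<and> c v u = reversepath (c u v) \<and> path_image (c u v) \<subseteq> hdisc
          \<and> path_image (c u v) \<inter> V = {u, v})
   \<and> (\<forall>u v u' v'. E u v \<longrightarrow> E u' v' \<longrightarrow> {u, v} \<noteq> {u', v'} \<longrightarrow>
          path_image (c u v) \<inter> path_image (c u' v') \<subseteq> {u, v} \<inter> {u', v'})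
   \<and> (\<forall>F \<in> components (hdisc - (V \<union> edge_set V E c)). F homeomorphic ball (0::complex) 1)"

definition locally_finite_vertices :: "complex set \<Rightarrow> bool" where
  "locally_finite_vertices V \<longleftrightarrow> (\<forall>K. compact K \<and> K \<subseteq> hdisc \<longrightarrow> finite (V \<inter> K))"

definition acts_on_map :: "(complex \<Rightarrow> complex) set \<Rightarrow> complex set \<Rightarrow> (complex \<Rightarrow> complex \<Rightarrow> bool)
    \<Rightarrow> (complex \<Rightarrow> complex \<Rightarrow> real \<Rightarrow> complex) \<Rightarrow> bool" where
  "acts_on_map G V E c \<longleftrightarrow> (\<forall>g\<in>G. g ` V = V
     \<and> g ` (V \<union> edge_set V E c) = V \<union> edge_set V E c
     \<and> (\<forall>u\<in>V. \<forall>v\<in>V. E u v \<longleftrightarrow> E (g u) (g v))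
     \<and> (\<forall>u v. E u v \<longrightarrow> g ` path_image (c u v) = path_image (c (g u) (g v))))"

definition quasi_transitive :: "(complex \<Rightarrow> complex) set \<Rightarrow> complex set \<Rightarrow> bool" where
  "quasi_transitive G V \<longleftrightarrow> finite ((\<lambda>v. (\<lambda>g. g v) ` G) ` V)"

end

(*
  After recentring by Moebius maps of the disc, an isometry of H^2 fixing 0 preserves norms and the
  real inner product, so it is determined by its values at two R-linearly independent points, and
  its value at the second one is an intersection point of a circle with a line. Hence only finitely
  many isometries take prescribed values at two distinct points v and a. Since g a stays within
  distance hdist v a of g v and V is locally finite, the action of G on the vertices is proper:
  only finitely many g in G send a given vertex to a given vertex. For a finite set R of orbit
  representatives, the elements of G moving R onto or next to R therefore form a finite set, and
  following a path from r to g r in the connected graph writes g as a product of them.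
*)
theory Submission
  imports Defs "HOL-Complex_Analysis.Riemann_Mapping"
begin

definition disc_delta :: "complex \<Rightarrow> complex \<Rightarrow> real" where
  "disc_delta x y = (cmod (x - y))^2 / ((1 - (cmod x)^2) * (1 - (cmod y)^2))"

lemma hdisc_iff: "z \<in> hdisc \<longleftrightarrow> cmod z < 1"
  by (simp add: hdisc_def)

lemma one_minus_norm_square_pos: "z \<in> hdisc \<Longrightarrow> 1 - (cmod z)^2 > 0"
  by (simp add: hdisc_iff abs_square_less_1)

lemma hdist_eq_arcosh_disc_delta: "hdist x y = arcosh (1 + 2 * disc_delta x y)"
  by (simp add: hdist_def disc_delta_def)

lemma disc_delta_nonneg: "x \<in> hdisc \<Longrightarrow> y \<in> hdisc \<Longrightarrow> disc_delta x y \<ge> 0"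
  using one_minus_norm_square_pos by (simp add: disc_delta_def less_imp_le)

lemma hyp_isom_hdisc: "hyp_isom g \<Longrightarrow> x \<in> hdisc \<Longrightarrow> g x \<in> hdisc"
  unfolding hyp_isom_def bij_betw_def by blast

lemma hyp_isom_disc_delta:
  assumes "hyp_isom g" "x \<in> hdisc" "y \<in> hdisc"
  shows "disc_delta (g x) (g y) = disc_delta x y"
proof -
  have "arcosh (1 + 2 * disc_delta (g x) (g y)) = arcosh (1 + 2 * disc_delta x y)"
    using assms unfolding hyp_isom_def by (simp add: hdist_eq_arcosh_disc_delta)
  then have "cosh (arcosh (1 + 2 * disc_delta (g x) (g y))) = cosh (arcosh (1 + 2 * disc_delta x y))"
    by simp
  then show ?thesis
    using assms disc_delta_nonneg hyp_isom_hdisc by simp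
qed

lemma isom_inv_left:
  assumes "hyp_isom g"
  shows "isom_inv g (g x) = x"
proof (cases "x \<in> hdisc")
  case True
  then show ?thesis
    using assms hyp_isom_hdisc unfolding hyp_isom_def isom_inv_def bij_betw_def
    by (simp add: inv_into_f_f)
next
  case False
  then show ?thesis
    using assms unfolding hyp_isom_def isom_inv_def by simp
qed

lemma comp_isom_inv: "hyp_isom g \<Longrightarrow> g \<circ> (isom_inv g \<circ> h) = h"
  unfolding hyp_isom_def isom_inv_def bij_betw_def by (auto simp: f_inv_into_f)

section \<open>Isometries of the disc are determined by few values\<close>

lemma Moebius_function_hdisc: "a \<in> hdisc \<Longrightarrow> z \<in> hdisc \<Longrightarrow> Moebius_function 0 a z \<in> hdisc"
  by (simp add: hdisc_iff Moebius_function_norm_lt_1)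

lemma Moebius_function_inverse:
  "a \<in> hdisc \<Longrightarrow> z \<in> hdisc \<Longrightarrow> Moebius_function 0 (-a) (Moebius_function 0 a z) = z"
  by (simp add: hdisc_iff Moebius_function_compose)

lemma Moebius_function_denominator_nonzero:
  assumes "a \<in> hdisc" "z \<in> hdisc"
  shows "1 - cnj a * z \<noteq> 0"
proof
  assume "1 - cnj a * z = 0"
  then have "cmod a * cmod z = 1"
    by (metis complex_mod_cnj norm_mult norm_one right_minus_eq)
  moreover have "cmod a * cmod z < 1"
    using assms by (metis hdisc_iff mult_strict_mono' norm_ge_zero mult_1_left)
  ultimately show False by simp
qed

lemma one_minus_norm_square_Moebius_function:
  assumes "a \<in> hdisc" "z \<in> hdisc"
  shows "(1 - (cmod (Moebius_function 0 a z))^2) * (cmod (1 - cnj a * z))^2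
       = (1 - (cmod a)^2) * (1 - (cmod z)^2)"
proof -
  let ?m = "Moebius_function 0 a z" and ?d = "1 - cnj a * z"
  have "?m * ?d = z - a"
    using Moebius_function_denominator_nonzero[OF assms] by (simp add: Moebius_function_simple)
  moreover have "complex_of_real ((1 - (cmod ?m)^2) * (cmod ?d)^2)
      = ?d * cnj ?d - (?m * ?d) * cnj (?m * ?d)"
    by (simp only: of_real_mult of_real_diff of_real_1 complex_norm_square) (simp add: algebra_simps)
  ultimately have "complex_of_real ((1 - (cmod ?m)^2) * (cmod ?d)^2)
      = ?d * cnj ?d - (z - a) * cnj (z - a)"
    by simp
  also have "\<dots> = (1 - a * cnj a) * (1 - z * cnj z)"
    by (simp add: algebra_simps)
  also have "\<dots> = complex_of_real ((1 - (cmod a)^2) * (1 - (cmod z)^2))"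
    by (simp only: of_real_mult of_real_diff of_real_1 complex_norm_square)
  finally show ?thesis
    using of_real_eq_iff by blast
qed

lemma Moebius_function_diff:
  assumes "a \<in> hdisc" "x \<in> hdisc" "y \<in> hdisc"
  shows "Moebius_function 0 a x - Moebius_function 0 a y
       = (x - y) * (1 - a * cnj a) / ((1 - cnj a * x) * (1 - cnj a * y))"
  using Moebius_function_denominator_nonzero[OF assms(1,2)]
    Moebius_function_denominator_nonzero[OF assms(1,3)]
  by (simp add: Moebius_function_simple field_simps)

lemma Moebius_function_disc_delta:
  assumes "a \<in> hdisc" "x \<in> hdisc" "y \<in> hdisc"
  shows "disc_delta (Moebius_function 0 a x) (Moebius_function 0 a y) = disc_delta x y"
proof -
  let ?A = "1 - (cmod a)^2" and ?P = "cmod (1 - cnj a * x)" and ?Q = "cmod (1 - cnj a * y)"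
  have pos: "?A > 0" "?P > 0" "?Q > 0"
    using assms one_minus_norm_square_pos Moebius_function_denominator_nonzero by auto
  have A: "1 - a * cnj a = complex_of_real ?A"
    by (simp only: of_real_diff of_real_1 complex_norm_square)
  have "cmod (1 - a * cnj a) = ?A"
    unfolding A norm_of_real using pos(1) by simp
  then have diff: "cmod (Moebius_function 0 a x - Moebius_function 0 a y)
      = cmod (x - y) * ?A / (?P * ?Q)"
    using Moebius_function_diff[OF assms] by (simp add: norm_mult norm_divide)
  have x: "1 - (cmod (Moebius_function 0 a x))^2 = ?A * (1 - (cmod x)^2) / ?P^2"
    and y: "1 - (cmod (Moebius_function 0 a y))^2 = ?A * (1 - (cmod y)^2) / ?Q^2"
    using one_minus_norm_square_Moebius_function assms pos by (simp_all add: field_simps)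
  have cancel: "(N * A / (P * Q))^2 / ((A * X / P^2) * (A * Y / Q^2)) = N^2 / (X * Y)"
    if "A > 0" "P > 0" "Q > 0" for N A X Y P Q :: real
    using that by (simp add: field_simps power2_eq_square)
  show ?thesis
    unfolding disc_delta_def diff x y using cancel[OF pos] by simp
qed

lemma norm_diff_square: "(cmod (u - w))^2 = (cmod u)^2 + (cmod w)^2 - 2 * Re (u * cnj w)"
  unfolding cmod_power2 by (simp add: power2_eq_square algebra_simps)

locale delta_map_fixing_origin =
  fixes k :: "complex \<Rightarrow> complex"
  assumes maps_hdisc: "x \<in> hdisc \<Longrightarrow> k x \<in> hdisc"
    and disc_delta_eq: "x \<in> hdisc \<Longrightarrow> y \<in> hdisc \<Longrightarrow> disc_delta (k x) (k y) = disc_delta x y"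
    and fixes_origin: "k 0 = 0"
begin

lemma norm_eq:
  assumes "x \<in> hdisc"
  shows "cmod (k x) = cmod x"
proof -
  have "disc_delta (k 0) (k x) = disc_delta 0 x"
    using assms by (simp add: disc_delta_eq hdisc_iff)
  then have "(cmod (k x))^2 / (1 - (cmod (k x))^2) = (cmod x)^2 / (1 - (cmod x)^2)"
    by (simp add: disc_delta_def fixes_origin)
  then have "(cmod (k x))^2 = (cmod x)^2"
    using one_minus_norm_square_pos[OF maps_hdisc[OF assms]] one_minus_norm_square_pos[OF assms]
    by (simp add: field_simps)
  then show ?thesis
    by simp
qed

lemma Re_mult_cnj_eq:
  assumes "x \<in> hdisc" "y \<in> hdisc"
  shows "Re (k x * cnj (k y)) = Re (x * cnj y)"
proof -
  have "(cmod (k x - k y))^2 = (cmod (x - y))^2"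
    using disc_delta_eq[OF assms] one_minus_norm_square_pos[OF assms(1)]
      one_minus_norm_square_pos[OF assms(2)]
    by (simp add: disc_delta_def norm_eq assms)
  then show ?thesis
    by (simp add: norm_diff_square norm_eq assms)
qed

end

lemma complex_eq_0_if_orthogonal:
  assumes "Re (z * cnj u) = 0" "Re (z * cnj v) = 0" "Im (u * cnj v) \<noteq> 0"
  shows "z = 0"
proof -
  let ?det = "Im u * Re v - Re u * Im v"
  have "Re z * ?det = Im u * Re (z * cnj v) - Im v * Re (z * cnj u)"
    "Im z * ?det = Re v * Re (z * cnj u) - Re u * Re (z * cnj v)"
    by (simp_all add: algebra_simps)
  then have "Re z * ?det = 0" "Im z * ?det = 0"
    using assms(1,2) by simp_all
  moreover have "?det \<noteq> 0"
    using assms(3) by simp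
  ultimately show ?thesis
    by (simp add: complex_eq_iff)
qed

lemma Im_mult_cnj_nonzero_transfer:
  assumes "cmod u' = cmod u" "cmod v' = cmod v" "Re (u' * cnj v') = Re (u * cnj v)"
    and "Im (u * cnj v) \<noteq> 0"
  shows "Im (u' * cnj v') \<noteq> 0"
proof -
  have "cmod (u' * cnj v') = cmod (u * cnj v)"
    using assms(1,2) by (simp add: norm_mult)
  then have "(Re (u' * cnj v'))^2 + (Im (u' * cnj v'))^2 = (Re (u * cnj v))^2 + (Im (u * cnj v))^2"
    by (metis cmod_power2)
  then have "(Im (u' * cnj v'))^2 = (Im (u * cnj v))^2"
    using assms(3) by simp
  then show ?thesis
    using assms(4) by auto
qed

lemma delta_maps_fixing_origin_eqI:
  assumes "delta_map_fixing_origin k" "delta_map_fixing_origin k'"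
    and "b \<in> hdisc" "p \<in> hdisc" "Im (b * cnj p) \<noteq> 0" "k b = k' b" "k p = k' p"
    and "x \<in> hdisc"
  shows "k x = k' x"
proof -
  interpret k: delta_map_fixing_origin k by fact
  interpret k': delta_map_fixing_origin k' by fact
  have "Re ((k x - k' x) * cnj (k y)) = 0" if "y \<in> hdisc" "k y = k' y" for y
    using k.Re_mult_cnj_eq[OF assms(8) that(1)] k'.Re_mult_cnj_eq[OF assms(8) that(1)] that(2)
    by (simp add: left_diff_distrib)
  moreover have "Im (k b * cnj (k p)) \<noteq> 0"
    using Im_mult_cnj_nonzero_transfer k.norm_eq k.Re_mult_cnj_eq assms(3-5) by simp
  ultimately have "k x - k' x = 0"
    using complex_eq_0_if_orthogonal assms(3,4,6,7) by blast
  then show ?thesis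
    by simp
qed

lemma finite_norm_eq_Re_mult_cnj_eq:
  assumes "b \<noteq> 0"
  shows "finite {z. cmod z = r \<and> Re (z * cnj b) = s}"
proof -
  let ?t = "sqrt ((r * cmod b)^2 - s^2)"
  have circle: "z * cnj b \<in> {Complex s ?t, Complex s (- ?t)}"
    if "cmod z = r" "Re (z * cnj b) = s" for z
  proof -
    have "s^2 + (Im (z * cnj b))^2 = (r * cmod b)^2"
      using that cmod_power2[of "z * cnj b"] by (simp add: norm_mult)
    then have "\<bar>Im (z * cnj b)\<bar> = ?t"
      by (metis add_diff_cancel_left' real_sqrt_abs)
    then show ?thesis
      using that(2) by (auto simp: complex_eq_iff abs_if split: if_splits)
  qed
  have "{z. cmod z = r \<and> Re (z * cnj b) = s}
      \<subseteq> (\<lambda>y. y / cnj b) ` {Complex s ?t, Complex s (- ?t)}"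
  proof
    fix z assume "z \<in> {z. cmod z = r \<and> Re (z * cnj b) = s}"
    then have "z * cnj b \<in> {Complex s ?t, Complex s (- ?t)}"
      using circle by blast
    moreover have "z = z * cnj b / cnj b"
      using assms by simp
    ultimately show "z \<in> (\<lambda>y. y / cnj b) ` {Complex s ?t, Complex s (- ?t)}"
      by (rule rev_image_eqI)
  qed
  then show ?thesis
    by (rule finite_subset) simp
qed

definition recentre :: "complex \<Rightarrow> (complex \<Rightarrow> complex) \<Rightarrow> complex \<Rightarrow> complex" where
  "recentre v h x = Moebius_function 0 (h v) (h (Moebius_function 0 (-v) x))"

lemma recentre_Moebius_function:
  assumes "v \<in> hdisc" "x \<in> hdisc"
  shows "recentre v h (Moebius_function 0 v x) = Moebius_function 0 (h v) (h x)"
  using assms by (simp add: recentre_def Moebius_function_inverse)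

lemma hyp_isom_eq_recentre:
  assumes "hyp_isom h" "v \<in> hdisc" "x \<in> hdisc"
  shows "h x = Moebius_function 0 (- h v) (recentre v h (Moebius_function 0 v x))"
  using assms by (simp add: recentre_Moebius_function hyp_isom_hdisc Moebius_function_inverse)

lemma delta_map_fixing_origin_recentre:
  assumes h: "hyp_isom h" and v: "v \<in> hdisc"
  shows "delta_map_fixing_origin (recentre v h)"
proof
  have hv: "h v \<in> hdisc"
    using h v by (rule hyp_isom_hdisc)
  have inner: "Moebius_function 0 (-v) x \<in> hdisc" if "x \<in> hdisc" for x
    using v that by (simp add: Moebius_function_norm_lt_1 hdisc_iff)
  show "recentre v h x \<in> hdisc" if "x \<in> hdisc" for x
    unfolding recentre_def using hv inner[OF that] h by (simp add: Moebius_function_hdisc hyp_isom_hdisc)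
  show "disc_delta (recentre v h x) (recentre v h y) = disc_delta x y"
    if "x \<in> hdisc" "y \<in> hdisc" for x y
  proof -
    have "-v \<in> hdisc"
      using v by (simp add: hdisc_iff)
    then show ?thesis
      unfolding recentre_def using that hv inner h
      by (simp add: Moebius_function_disc_delta hyp_isom_hdisc hyp_isom_disc_delta)
  qed
  show "recentre v h 0 = 0"
    by (simp add: recentre_def Moebius_function_of_zero Moebius_function_eq_zero)
qed

lemma hyp_isom_eq_if_recentre_eq:
  assumes h: "hyp_isom h1" "hyp_isom h2" and v: "v \<in> hdisc" "h1 v = h2 v"
    and bp: "b \<in> hdisc" "p \<in> hdisc" "Im (b * cnj p) \<noteq> 0"
    and "recentre v h1 b = recentre v h2 b" "recentre v h1 p = recentre v h2 p"
  shows "h1 = h2"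
proof
  fix x
  show "h1 x = h2 x"
  proof (cases "x \<in> hdisc")
    case True
    have "recentre v h1 y = recentre v h2 y" if "y \<in> hdisc" for y
      using delta_maps_fixing_origin_eqI[OF delta_map_fixing_origin_recentre[OF h(1) v(1)]
          delta_map_fixing_origin_recentre[OF h(2) v(1)] bp assms(8,9) that] .
    then show ?thesis
      using hyp_isom_eq_recentre[OF h(1) v(1) True] hyp_isom_eq_recentre[OF h(2) v(1) True] v True
      by (simp add: Moebius_function_hdisc)
  next
    case False
    then show ?thesis
      using h unfolding hyp_isom_def by simp
  qed
qed

text \<open>Recentred at v, all such h fix 0 and agree at b, so each is determined by its value at p,
  which lies on the intersection of a circle with a line.\<close>
lemma finite_hyp_isoms_prescribed_at_two_points:
  assumes v: "v \<in> hdisc" and a: "a \<in> hdisc" "a \<noteq> v"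
  shows "finite {h. hyp_isom h \<and> h v = w \<and> h a = c}"
proof (cases "{h. hyp_isom h \<and> h v = w \<and> h a = c} = {}")
  case False
  let ?H = "{h. hyp_isom h \<and> h v = w \<and> h a = c}"
  define b where "b = Moebius_function 0 v a"
  define p where "p = \<i> * b / 2"
  have b: "b \<in> hdisc" "b \<noteq> 0"
  proof -
    show "b \<in> hdisc"
      using v a(1) by (simp add: b_def Moebius_function_hdisc)
    have "a = Moebius_function 0 (-v) b"
      using Moebius_function_inverse[OF v a(1)] by (simp add: b_def)
    then show "b \<noteq> 0"
      using a(2) by (auto simp: Moebius_function_of_zero)
  qed
  have p: "p \<in> hdisc" "Im (b * cnj p) \<noteq> 0"
  proof -
    have "b * cnj p = - \<i> * complex_of_real ((cmod b)^2) / 2"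
      by (simp only: complex_norm_square) (simp add: p_def)
    then show "Im (b * cnj p) \<noteq> 0"
      using b(2) by simp
    show "p \<in> hdisc"
      using b(1) by (simp add: p_def hdisc_iff norm_mult norm_divide)
  qed
  have k: "delta_map_fixing_origin (recentre v h)" if "h \<in> ?H" for h
    using that v by (simp add: delta_map_fixing_origin_recentre)
  have kb: "recentre v h b = Moebius_function 0 w c" if "h \<in> ?H" for h
    using that v a by (simp add: b_def recentre_Moebius_function)
  have "inj_on (\<lambda>h. recentre v h p) ?H"
    using hyp_isom_eq_if_recentre_eq v b(1) p kb by (intro inj_onI) auto
  moreover have "(\<lambda>h. recentre v h p) ` ?H
      \<subseteq> {z. cmod z = cmod p \<and> Re (z * cnj (Moebius_function 0 w c)) = Re (p * cnj b)}"
  proof (rule image_subsetI)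
    fix h assume h: "h \<in> ?H"
    interpret delta_map_fixing_origin "recentre v h"
      by (rule k[OF h])
    show "recentre v h p \<in> {z. cmod z = cmod p \<and> Re (z * cnj (Moebius_function 0 w c)) = Re (p * cnj b)}"
      using norm_eq[OF p(1)] Re_mult_cnj_eq[OF p(1) b(1)] kb[OF h] by simp
  qed
  moreover have "Moebius_function 0 w c \<noteq> 0"
  proof -
    obtain h where h: "h \<in> ?H"
      using False by blast
    interpret delta_map_fixing_origin "recentre v h"
      by (rule k[OF h])
    show ?thesis
      using norm_eq[OF b(1)] kb[OF h] b(2) by force
  qed
  ultimately show ?thesis
    using finite_norm_eq_Re_mult_cnj_eq finite_subset finite_imageD by blast
qed (metis finite.emptyI)

section \<open>Properness of the action on the vertices\<close>

lemma compact_disc_delta_cball: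
  assumes "w \<in> hdisc"
  shows "compact {y \<in> hdisc. disc_delta w y \<le> r}"
proof -
  let ?K = "{y. cmod y \<le> 1 \<and> (cmod (w - y))^2 \<le> r * ((1 - (cmod w)^2) * (1 - (cmod y)^2))}"
  have "closed ?K"
    by (intro closed_Collect_conj closed_Collect_le continuous_intros)
  moreover have "bounded ?K"
    by (rule bounded_subset[OF bounded_cball[of 0 1]]) auto
  moreover have "?K = {y \<in> hdisc. disc_delta w y \<le> r}"
  proof (intro set_eqI iffI)
    fix y assume y: "y \<in> ?K"
    have "y \<in> hdisc"
    proof (rule ccontr)
      assume "y \<notin> hdisc"
      then have "cmod y = 1"
        using y by (simp add: hdisc_iff)
      then have "w = y"
        using y by simp
      then show False
        using assms \<open>cmod y = 1\<close> by (simp add: hdisc_iff)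
    qed
    then show "y \<in> {y \<in> hdisc. disc_delta w y \<le> r}"
      using y one_minus_norm_square_pos assms by (simp add: disc_delta_def divide_le_eq)
  next
    fix y assume "y \<in> {y \<in> hdisc. disc_delta w y \<le> r}"
    then show "y \<in> ?K"
      using one_minus_norm_square_pos assms by (simp add: disc_delta_def divide_le_eq hdisc_iff)
  qed
  ultimately show ?thesis
    by (metis compact_eq_bounded_closed)
qed

lemma finite_isoms_between_vertices:
  assumes G: "\<And>g. g \<in> G \<Longrightarrow> hyp_isom g" "\<And>g. g \<in> G \<Longrightarrow> g ` V \<subseteq> V"
    and V: "infinite V" "V \<subseteq> hdisc" "locally_finite_vertices V"
    and v: "v \<in> V" and w: "w \<in> V"
  shows "finite {g \<in> G. g v = w}"
proof -
  obtain a where a: "a \<in> V" "a \<noteq> v"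
    using infinite_imp_nonempty[of "V - {v}"] V(1) by auto
  let ?K = "{y \<in> hdisc. disc_delta w y \<le> disc_delta v a}"
  have "finite (V \<inter> ?K)"
    using V(2,3) w compact_disc_delta_cball unfolding locally_finite_vertices_def by blast
  moreover have "{g \<in> G. g v = w} \<subseteq> (\<Union>c \<in> V \<inter> ?K. {h. hyp_isom h \<and> h v = w \<and> h a = c})"
  proof
    fix g assume g: "g \<in> {g \<in> G. g v = w}"
    then have "hyp_isom g" "g a \<in> V"
      using G a(1) by auto
    moreover have "disc_delta w (g a) = disc_delta v a"
      using g hyp_isom_disc_delta[OF \<open>hyp_isom g\<close>] v a(1) V(2) by auto
    ultimately show "g \<in> (\<Union>c \<in> V \<inter> ?K. {h. hyp_isom h \<and> h v = w \<and> h a = c})"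
      using g V(2) by auto
  qed
  ultimately show ?thesis
    using finite_hyp_isoms_prescribed_at_two_points v a V(2)
    by (meson finite_UN_I finite_subset subsetD)
qed

section \<open>Finite generation\<close>

lemma isom_generated_generator: "s \<in> S \<Longrightarrow> s \<in> isom_generated S"
  using isom_generated.gen_mult[OF _ isom_generated.gen_id] by fastforce

lemma isom_generated_comp:
  assumes "g \<in> isom_generated S" "h \<in> isom_generated S"
  shows "g \<circ> h \<in> isom_generated S"
  using assms
proof (induction g rule: isom_generated.induct)
  case gen_id
  then show ?case by simp
next
  case (gen_mult s g)
  then show ?case by (metis comp_assoc isom_generated.gen_mult)
next
  case (gen_inv s g)
  then show ?case by (metis comp_assoc isom_generated.gen_inv)
qed

lemma isom_generated_subset:
  assumes "isom_subgroup G" "S \<subseteq> G"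
  shows "isom_generated S \<subseteq> G"
proof
  fix g assume "g \<in> isom_generated S"
  then show "g \<in> G"
    by induction (use assms in \<open>unfold isom_subgroup_def, blast+\<close>)
qed

lemma walk_rtranclp:
  "p \<noteq> [] \<Longrightarrow> (\<forall>i. Suc i < length p \<longrightarrow> E (p ! i) (p ! Suc i)) \<Longrightarrow> E\<^sup>*\<^sup>* (hd p) (last p)"
proof (induction p)
  case Nil
  then show ?case by simp
next
  case (Cons x xs)
  show ?case
  proof (cases "xs = []")
    case False
    have "E x (hd xs)"
      using Cons.prems(2)[rule_format, of 0] False by (simp add: hd_conv_nth)
    moreover have "E\<^sup>*\<^sup>* (hd xs) (last xs)"
      using Cons.IH False Cons.prems(2) by fastforce
    ultimately show ?thesis
      using False by (simp add: converse_rtranclp_into_rtranclp)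
  qed simp
qed

lemma conn_in_rtranclp: "conn_in W E u v \<Longrightarrow> E\<^sup>*\<^sup>* u v"
  unfolding conn_in_def using walk_rtranclp by blast

definition translates_near :: "('a \<Rightarrow> 'a) set \<Rightarrow> ('a \<Rightarrow> 'a \<Rightarrow> bool) \<Rightarrow> 'a set \<Rightarrow> ('a \<Rightarrow> 'a) set"
  where "translates_near G E R = {g \<in> G. \<exists>r\<in>R. \<exists>r'\<in>R. g r' = r \<or> E r (g r')}"

lemma finite_translates_near:
  assumes R: "finite R" "R \<subseteq> V"
    and lf: "locally_finite_graph V E"
    and graph: "simple_graph V E"
    and fibres: "\<And>v w. v \<in> V \<Longrightarrow> w \<in> V \<Longrightarrow> finite {g \<in> G. g v = w}"
  shows "finite (translates_near G E R)"
proof -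
  define N where "N = R \<union> (\<Union>r\<in>R. {u. E r u})"
  have "finite N" "N \<subseteq> V"
    using R lf graph unfolding N_def locally_finite_graph_def simple_graph_def by auto
  then have "finite (\<Union>r'\<in>R. \<Union>w\<in>N. {g \<in> G. g r' = w})"
    using R fibres by (intro finite_UN_I) auto
  moreover have "translates_near G E R \<subseteq> (\<Union>r'\<in>R. \<Union>w\<in>N. {g \<in> G. g r' = w})"
    unfolding translates_near_def N_def by blast
  ultimately show ?thesis
    by (rule finite_subset[rotated])
qed

lemma isom_generated_translates_near:
  assumes G: "isom_subgroup G"
    and act: "\<And>g. g \<in> G \<Longrightarrow> g ` V \<subseteq> V" "\<And>g u u'. g \<in> G \<Longrightarrow> E u u' \<Longrightarrow> E (g u) (g u')"
    and graph: "simple_graph V E" "graph_connected V E"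
    and R: "R \<subseteq> V" "\<And>u. u \<in> V \<Longrightarrow> \<exists>r\<in>R. \<exists>g\<in>G. g r = u"
    and "V \<noteq> {}"
  shows "isom_generated (translates_near G E R) = G"
proof -
  let ?S = "translates_near G E R"
  obtain r1 where r1: "r1 \<in> R"
    using R(2) \<open>V \<noteq> {}\<close> by (metis ex_in_conv)
  have reachable: "h \<in> isom_generated ?S" if "E\<^sup>*\<^sup>* r1 u" "h \<in> G" "r \<in> R" "h r = u" for u h r
    using that
  proof (induction u arbitrary: h r rule: rtranclp_induct)
    case base
    then show ?case
      using r1 by (auto simp: translates_near_def intro: isom_generated_generator)
  next
    case (step u u')
    have "u \<in> V"
      using graph(1) step.hyps(2) unfolding simple_graph_def by blast
    then obtain r' h' where r': "r' \<in> R" and h': "h' \<in> G" "h' r' = u"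
      using R(2) by blast
    have h'_isom: "hyp_isom h'" and h'_inv: "isom_inv h' \<in> G"
      using G h'(1) unfolding isom_subgroup_def by blast+
    define s where "s = isom_inv h' \<circ> h"
    have "E (isom_inv h' u) (isom_inv h' u')"
      using act(2)[OF h'_inv] step.hyps(2) .
    then have "E r' (s r)"
      using h' step.prems(3) isom_inv_left[OF h'_isom] by (auto simp: s_def)
    moreover have "s \<in> G"
      using G h'_inv step.prems(1) unfolding s_def isom_subgroup_def by blast
    ultimately have "s \<in> ?S"
      using r' step.prems(2) by (auto simp: translates_near_def)
    then have "h' \<circ> s \<in> isom_generated ?S"
      using step.IH[OF h'(1) r' h'(2)] by (blast intro: isom_generated_comp isom_generated_generator)
    moreover have "h' \<circ> s = h"
      using comp_isom_inv[OF h'_isom] by (simp add: s_def)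
    ultimately show ?case
      by simp
  qed
  have "G \<subseteq> isom_generated ?S"
  proof
    fix g assume g: "g \<in> G"
    have "g r1 \<in> V"
      using act(1)[OF g] R(1) r1 by blast
    then have "conn_in V E r1 (g r1)"
      using graph(2) R(1) r1 unfolding graph_connected_def by blast
    then show "g \<in> isom_generated ?S"
      using reachable[OF conn_in_rtranclp] g r1 by blast
  qed
  moreover have "isom_generated ?S \<subseteq> G"
    using G by (rule isom_generated_subset) (auto simp: translates_near_def)
  ultimately show ?thesis
    by blast
qed

lemma quasi_transitive_representatives:
  assumes "quasi_transitive G V" "id \<in> G"
  obtains R where "finite R" "R \<subseteq> V" "\<And>u. u \<in> V \<Longrightarrow> \<exists>r\<in>R. \<exists>g\<in>G. g r = u"
proof -
  define orbit where "orbit v = (\<lambda>g. g v) ` G" for v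
  define rep where "rep C = (SOME v. v \<in> V \<and> orbit v = C)" for C
  have rep: "rep (orbit u) \<in> V \<and> orbit (rep (orbit u)) = orbit u" if "u \<in> V" for u
    unfolding rep_def by (rule someI[of _ u]) (use that in simp)
  have "finite (rep ` orbit ` V)"
    using assms(1) unfolding quasi_transitive_def orbit_def by simp
  moreover have "rep ` orbit ` V \<subseteq> V"
    using rep by auto
  moreover have "\<exists>r\<in>rep ` orbit ` V. \<exists>g\<in>G. g r = u" if "u \<in> V" for u
  proof -
    have "u \<in> orbit u"
      using rev_image_eqI[OF assms(2), of u "\<lambda>g. g u"] by (simp add: orbit_def)
    then have "u \<in> (\<lambda>g. g (rep (orbit u))) ` G"
      using rep[OF that] by (simp add: orbit_def)
    then obtain g where "u = g (rep (orbit u))" "g \<in> G"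
      by (rule imageE)
    then show ?thesis
      using that by (intro bexI[of _ "rep (orbit u)"] bexI[of _ g]) auto
  qed
  ultimately show ?thesis
    by (rule that)
qed

lemma acts_on_map_image:
  "acts_on_map G V E c \<Longrightarrow> g \<in> G \<Longrightarrow> g ` V = V"
  unfolding acts_on_map_def by (drule bspec) auto

lemma acts_on_map_adjacent:
  assumes "acts_on_map G V E c" "simple_graph V E" "g \<in> G" "E u v"
  shows "E (g u) (g v)"
proof -
  have "\<forall>u\<in>V. \<forall>v\<in>V. E u v \<longleftrightarrow> E (g u) (g v)"
    using bspec[OF assms(1)[unfolded acts_on_map_def] assms(3)] by (elim conjE)
  moreover have "u \<in> V" "v \<in> V"
    using assms(2,4) unfolding simple_graph_def by blast+
  ultimately show ?thesis
    using assms(4) by blast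
qed

theorem proposition4p2:
  fixes V :: "complex set" and E :: "complex \<Rightarrow> complex \<Rightarrow> bool"
    and c :: "complex \<Rightarrow> complex \<Rightarrow> real \<Rightarrow> complex"
    and G :: "(complex \<Rightarrow> complex) set"
  assumes "is_hyp_map V E c"
    and "locally_finite_graph V E"
    and "one_ended V E"
    and "locally_finite_vertices V"
    and "isom_subgroup G"
    and "acts_on_map G V E c"
    and "quasi_transitive G V"
  shows "finitely_generated G"
proof -
  have graph: "simple_graph V E" "graph_connected V E"
    and V: "infinite V" "V \<subseteq> hdisc"
    using assms(1) unfolding is_hyp_map_def by auto
  have isom: "hyp_isom g" if "g \<in> G" for g
    using assms(5) that unfolding isom_subgroup_def by blast
  have image: "g ` V \<subseteq> V" if "g \<in> G" for g
    using acts_on_map_image[OF assms(6) that] by simp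
  have adjacent: "E (g u) (g u')" if "g \<in> G" "E u u'" for g u u'
    using acts_on_map_adjacent[OF assms(6) graph(1) that] .
  have "id \<in> G"
    using assms(5) unfolding isom_subgroup_def by blast
  then obtain R where R: "finite R" "R \<subseteq> V" "\<And>u. u \<in> V \<Longrightarrow> \<exists>r\<in>R. \<exists>g\<in>G. g r = u"
    using quasi_transitive_representatives[OF assms(7)] by blast
  have "finite {g \<in> G. g v = w}" if "v \<in> V" "w \<in> V" for v w
    using finite_isoms_between_vertices[OF isom image V assms(4) that] .
  then have "finite (translates_near G E R)"
    using finite_translates_near[OF R(1,2) assms(2) graph(1)] by blast
  moreover have "isom_generated (translates_near G E R) = G"
    using assms(5) image adjacent graph R(2,3) infinite_imp_nonempty[OF V(1)]
    by (rule isom_generated_translates_near)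
  ultimately show ?thesis
    unfolding finitely_generated_def translates_near_def by blast
qed

end
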